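(* Let $\delta_B,\delta_R\ge1$ be integers, let $T_0(\lambda)$ be the matrix defined in the context, and let \[\sigma_1=\{\lambda\in\mathbb C:\ T_0(\lambda)\text{ has an eigenvalue of modulus }(\delta_R\delta_B)^{-1/2}\}\] (which is a subset of $[0,\infty)$). Then the eigenvalues $\mu^\pm(\lambda)$ of $T_0(\lambda)$ may be chosen to be single valued analytic functions on $\mathbb C\setminus\sigma_1$ satisfying, as $\lambda\to-\infty$ along the real axis, \[e^{-2|\operatorname{Im}\sqrt\lambda|}\mu^+(\lambda)\to\frac{\delta_R+1}{2\delta_R}\cdot\frac{\delta_B+1}{2\delta_B},\qquad e^{2|\operatorname{Im}\sqrt\lambda|}\mu^-(\lambda)\to\frac{2}{\delta_R+1}\cdot\frac{2}{\delta_B+1}.\] On $\mathbb C\setminus\sigma_1$ one has $|\mu^+(\lambda)|>1/\sqrt{\delta_R\delta_B}$ and $|\mu^-(\lambda)|<1/\sqrt{\delta_R\delta_B}$. The functions $\mu^+$ and $\mu^-$ have continuous extensions to the real axis from the upper and from the lower half planes, which are analytic except on the discrete set where $(\operatorname{tr}T_0(\lambda))^2=4/(\delta_R\delta_B)$. If $\nu\in\sigma_1$ then \[\lim_{\epsilon\to0^+}\bigl(\mu^\pm(\nu+i\epsilon)-\mu^\pm(\nu-i\epsilon)\bigr)=2i\,\operatorname{Im}(\mu^\pm(\nu)),\] where $\mu^\pm(\nu)$ on the right denotes the boundary value $\lim_{\epsilon\to0^+}\mu^\pm(\nu+i\epsilon)$.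
   Context: With $\omega=\sqrt\lambda$, define the entire functions $c(\lambda)=\cos\omega$, $c'(\lambda)=-\omega\sin\omega$, $s(\lambda)=\sin\omega/\omega$, $s'(\lambda)=\cos\omega$. Let $M_0=\begin{pmatrix}c&s\\c'&s'\end{pmatrix}$, $J_B=\operatorname{diag}(1,1/\delta_B)$, $J_R=\operatorname{diag}(1,1/\delta_R)$, and $T_0(\lambda)=J_RM_0J_BM_0$. Then $\det T_0(\lambda)=1/(\delta_B\delta_R)$ and $\operatorname{tr}T_0(\lambda)=\cos^2\omega(1+\frac1{\delta_B\delta_R})-\sin^2\omega(\frac1{\delta_R}+\frac1{\delta_B})$; the eigenvalues are $\mu^\pm=\frac12\operatorname{tr}T_0\pm\sqrt{\frac14(\operatorname{tr}T_0)^2-\det T_0}$, and $\mu^+\mu^-=1/(\delta_B\delta_R)$. *)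

theory Defs
  imports "HOL-Analysis.Analysis"
begin

text \<open>Entire functions c, c', s, s' of lambda (omega = sqrt lambda; they do not
  depend on the choice of the square root branch).\<close>
definition cfun :: "complex \<Rightarrow> complex" where
  "cfun l = cos (csqrt l)"
definition cfun' :: "complex \<Rightarrow> complex" where
  "cfun' l = - csqrt l * sin (csqrt l)"
definition sfun :: "complex \<Rightarrow> complex" where
  "sfun l = (if l = 0 then 1 else sin (csqrt l) / csqrt l)"
definition sfun' :: "complex \<Rightarrow> complex" where
  "sfun' l = cos (csqrt l)"

definition M0 :: "complex \<Rightarrow> complex^2^2" where
  "M0 l = vector [vector [cfun l, sfun l], vector [cfun' l, sfun' l]]"

definition Jmat :: "nat \<Rightarrow> complex^2^2" where
  "Jmat d = vector [vector [1, 0], vector [0, 1 / of_nat d]]"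

definition T0 :: "nat \<Rightarrow> nat \<Rightarrow> complex \<Rightarrow> complex^2^2" where
  "T0 dB dR l = Jmat dR ** M0 l ** Jmat dB ** M0 l"

definition is_eigenvalue :: "complex^2^2 \<Rightarrow> complex \<Rightarrow> bool" where
  "is_eigenvalue A m \<longleftrightarrow> (\<exists>v. v \<noteq> 0 \<and> A *v v = m *s v)"

definition sigma1 :: "nat \<Rightarrow> nat \<Rightarrow> complex set" where
  "sigma1 dB dR = {l. \<exists>m. is_eigenvalue (T0 dB dR l) m \<and> cmod m = 1 / sqrt (real (dR * dB))}"

definition real_analytic_at :: "(real \<Rightarrow> complex) \<Rightarrow> real \<Rightarrow> bool" where
  "real_analytic_at f x0 \<longleftrightarrow> (\<exists>r>0. \<exists>a::nat \<Rightarrow> complex.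
      \<forall>x. \<bar>x - x0\<bar> < r \<longrightarrow> (\<lambda>n. a n * of_real (x - x0) ^ n) sums f x)"

end

(*
  Write \<omega> = sqrt \<lambda> and r = (\<delta>\<^sub>R \<delta>\<^sub>B)^(-1/2). Then det T\<^sub>0 = r\<^sup>2 and tr T\<^sub>0 = A + B cos 2\<omega>, so
  the eigenvalues of T\<^sub>0 are r w and r/w, where w + 1/w = ntr := tr T\<^sub>0 / r. The root of
  w\<^sup>2 - ntr w + 1 = 0 outside the unit disc is a holomorphic function of ntr off the segment
  [-2, 2], and \<sigma>\<^sub>1 is the preimage of that segment; it lies in [0, \<infinity>) because |ntr| \<le> 2 forces
  cos 2\<omega> \<in> [-1, 1], using 2r \<le> A + B and 2r \<le> B - A.

  On the real axis ntr is real. At a point of \<sigma>\<^sub>1 with ntr \<noteq> \<plusminus>2 its derivative does not vanish,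
  so near that point ntr maps the upper half plane to one side of the segment, and there the
  outer root coincides with one of the two branches s/2 \<plusminus> i sqrt (1 - s\<^sup>2/4), which are holomorphic
  across the open segment. This gives the boundary values, their continuity and real
  analyticity; at ntr = \<plusminus>2 both roots tend to \<plusminus>1. The jump formula follows from
  \<mu>(conj \<lambda>) = conj \<mu>(\<lambda>), and the asymptotics from tr T\<^sub>0 ~ (B/2) e^(2 |Im \<omega>|) as \<lambda> \<rightarrow> -\<infinity>.
*)

theory Submission
  imports Defs "HOL-Complex_Analysis.Complex_Analysis" "HOL-Real_Asymp.Real_Asymp"
begin

lemma is_eigenvalue_iff_char_poly:
  fixes A :: "complex^2^2"
  shows "is_eigenvalue A m \<longleftrightarrow> m\<^sup>2 - trace A * m + det A = 0"
proof -
  have "mat m *v v = m *s v" for v :: "complex^2"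
    by (simp add: vec_eq_iff matrix_vector_mult_def mat_def forall_2 sum_2)
  then have "is_eigenvalue A m \<longleftrightarrow> (\<exists>v. v \<noteq> 0 \<and> (A - mat m) *v v = 0)"
    by (simp add: is_eigenvalue_def matrix_vector_mult_diff_rdistrib)
  also have "\<dots> \<longleftrightarrow> det (A - mat m) = 0"
    using invertible_det_nz[of "A - mat m"] invertible_left_inverse[of "A - mat m"]
      matrix_left_invertible_ker[of "A - mat m"] by blast
  also have "det (A - mat m) = m\<^sup>2 - trace A * m + det A"
    by (simp add: det_2 trace_def sum_2 mat_def algebra_simps power2_eq_square)
  finally show ?thesis .
qed

section \<open>The entire function \<open>cos (2 sqrt z)\<close>\<close>

definition cos_2sqrt :: "complex \<Rightarrow> complex" where
  "cos_2sqrt z = cos (2 * csqrt z)"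

lemma cos_eq_if_sq_eq: "(x::complex)\<^sup>2 = y\<^sup>2 \<Longrightarrow> cos x = cos y"
  by (metis cos_minus power2_eq_iff)

lemma cos_2sqrt_alt: "cos_2sqrt z = cos (2 * \<i> * csqrt (- z))"
  unfolding cos_2sqrt_def by (rule cos_eq_if_sq_eq) (simp add: power_mult_distrib)

lemma cos_2sqrt_has_field_derivative:
  assumes "z \<notin> \<real>\<^sub>\<le>\<^sub>0"
  shows "(cos_2sqrt has_field_derivative - sin (2 * csqrt z) / csqrt z) (at z)"
proof -
  have "csqrt z \<noteq> 0" using assms by auto
  then have "((\<lambda>z. cos (2 * csqrt z)) has_field_derivative - sin (2 * csqrt z) / csqrt z) (at z)"
    using assms by (auto intro!: derivative_eq_intros simp: field_simps)
  then show ?thesis by (simp add: cos_2sqrt_def[abs_def])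
qed

lemma holomorphic_cos_2sqrt: "cos_2sqrt holomorphic_on UNIV"
proof (rule no_isolated_singularity[where K = "{0}"])
  \<comment> \<open>the value does not depend on the branch of the root: on the negative reals use \<open>csqrt (- z)\<close>\<close>
  have "cos_2sqrt field_differentiable at z" if "z \<noteq> 0" for z
  proof (cases "z \<in> \<real>\<^sub>\<le>\<^sub>0")
    case False
    then show ?thesis
      using cos_2sqrt_has_field_derivative field_differentiable_def by blast
  next
    case True
    then have "- z \<notin> \<real>\<^sub>\<le>\<^sub>0" using that by (auto simp: complex_nonpos_Reals_iff complex_eq_iff)
    then have "(\<lambda>z. cos (2 * \<i> * csqrt (- z))) field_differentiable at z"
      by (auto intro!: derivative_eq_intros simp: field_differentiable_def)
    then show ?thesis by (simp add: cos_2sqrt_alt[abs_def])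
  qed
  then show "cos_2sqrt holomorphic_on UNIV - {0}"
    by (simp add: field_differentiable_at_within holomorphic_on_def)
  have "(csqrt \<longlongrightarrow> 0) (at 0)"
  proof (rule tendsto_norm_zero_cancel)
    have "((\<lambda>z::complex. sqrt (norm z)) \<longlongrightarrow> sqrt (norm (0::complex))) (at 0)"
      by (intro tendsto_intros)
    then show "((\<lambda>z. norm (csqrt z)) \<longlongrightarrow> 0) (at 0)" by simp
  qed
  then have "isCont cos_2sqrt 0"
    unfolding isCont_def cos_2sqrt_def by (auto intro!: tendsto_eq_intros)
  then show "continuous_on UNIV cos_2sqrt"
    using \<open>\<And>z. z \<noteq> 0 \<Longrightarrow> cos_2sqrt field_differentiable at z\<close>
    by (metis continuous_at_imp_continuous_on field_differentiable_imp_continuous_at)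
qed auto

lemma cos_2sqrt_cnj: "cos_2sqrt (cnj z) = cnj (cos_2sqrt z)"
  unfolding cos_2sqrt_def cnj_cos
  by (rule cos_eq_if_sq_eq) (simp add: power_mult_distrib flip: complex_cnj_power)

lemma cos_2sqrt_of_real_nonneg: "0 \<le> x \<Longrightarrow> cos_2sqrt (of_real x) = of_real (cos (2 * sqrt x))"
  by (simp add: cos_2sqrt_def csqrt_of_real flip: cos_of_real)

lemma cos_2sqrt_of_real_nonpos:
  assumes "x \<le> 0"
  shows "cos_2sqrt (of_real x) = of_real (cosh (2 * sqrt (- x)))"
proof -
  have "csqrt (- of_real x) = of_real (sqrt (- x))"
    using assms csqrt_of_real[of "- x"] by simp
  then have "cos_2sqrt (of_real x) = cos (\<i> * of_real (2 * sqrt (- x)))"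
    by (simp add: cos_2sqrt_alt mult_ac)
  also have "\<dots> = of_real (cosh (2 * sqrt (- x)))"
    unfolding cosh_real[symmetric] by (simp add: cosh_def exp_minus)
  finally show ?thesis .
qed

lemma Im_eq_0_if_cos_real_bounded:
  fixes w :: complex
  assumes "Im (cos w) = 0" and "\<bar>Re (cos w)\<bar> \<le> 1"
  shows "Im w = 0"
proof (rule ccontr)
  assume y: "Im w \<noteq> 0"
  then have "exp (- Im w) - exp (Im w) \<noteq> 0" by simp
  then have "sin (Re w) = 0" using assms(1) by (simp add: Im_cos)
  then have "\<bar>cos (Re w)\<bar> = 1" using sin_cos_squared_add[of "Re w"] by (simp add: abs_square_eq_1)
  have "1 < (exp (Im w) + exp (- Im w)) / 2"
    using cosh_real_ge_1[of "Im w"] cosh_real_one_iff[of "Im w"] y by (simp add: cosh_def)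
  then have "1 < \<bar>Re (cos w)\<bar>" using \<open>\<bar>cos (Re w)\<bar> = 1\<close> by (simp add: Re_cos abs_mult)
  then show False using assms(2) by simp
qed

section \<open>The trace and determinant of \<open>T\<^sub>0\<close>\<close>

lemma sfun_mult_cfun': "sfun z * cfun' z = - (sin (csqrt z))\<^sup>2"
  by (cases "z = 0") (auto simp: sfun_def cfun'_def power2_eq_square)

lemma det_M0: "det (M0 z) = 1"
proof -
  have "det (M0 z) = (cos (csqrt z))\<^sup>2 - sfun z * cfun' z"
    by (simp add: M0_def det_2 cfun_def sfun'_def power2_eq_square)
  then show ?thesis by (simp add: sfun_mult_cfun')
qed

lemma det_T0: "det (T0 dB dR z) = 1 / (of_nat dR * of_nat dB)"
  unfolding T0_def by (simp only: det_mul det_M0) (simp add: det_2 Jmat_def)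

lemma trace_T0:
  "trace (T0 dB dR z) = (1 - 1 / of_nat dR) * (1 - 1 / of_nat dB) / 2
                        + (1 + 1 / of_nat dR) * (1 + 1 / of_nat dB) / 2 * cos_2sqrt z"
proof -
  define p q :: complex where "p = 1 / of_nat dR" and "q = 1 / of_nat dB"
  have "trace (T0 dB dR z) = (cos (csqrt z))\<^sup>2 + (p + q) * (sfun z * cfun' z) + p * q * (cos (csqrt z))\<^sup>2"
    by (simp add: T0_def Jmat_def M0_def trace_def sum_2 matrix_matrix_mult_def cfun_def sfun'_def
        p_def q_def power2_eq_square algebra_simps)
  also have "\<dots> = (1 - p) * (1 - q) / 2 + (1 + p) * (1 + q) / 2 * cos_2sqrt z"
    unfolding sfun_mult_cfun' cos_2sqrt_def cos_double_cos sin_squared_eq by (simp add: field_simps)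
  finally show ?thesis by (simp add: p_def q_def)
qed

section \<open>Roots of \<open>w\<^sup>2 - s w + 1\<close>\<close>

lemma Re_csqrt_pos: "z \<notin> \<real>\<^sub>\<le>\<^sub>0 \<Longrightarrow> 0 < Re (csqrt z)"
proof (rule ccontr)
  assume z: "z \<notin> \<real>\<^sub>\<le>\<^sub>0" and "\<not> 0 < Re (csqrt z)"
  then have "Re (csqrt z) = 0" using csqrt_principal[of z] by auto
  then have "(csqrt z)\<^sup>2 = - of_real ((Im (csqrt z))\<^sup>2)"
    by (simp add: complex_eq_iff power2_eq_square)
  then have "z = - of_real ((Im (csqrt z))\<^sup>2)" by simp
  then obtain y where "z = - of_real (y\<^sup>2)" by blast
  then have "z \<in> \<real>\<^sub>\<le>\<^sub>0" by (simp add: complex_nonpos_Reals_iff)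
  then show False using z by simp
qed

lemma norm_diff_less_norm_add:
  fixes u v :: complex
  assumes "0 < Re (u * cnj v)"
  shows "cmod (u - v) < cmod (u + v)"
proof -
  have "(cmod (u + v))\<^sup>2 - (cmod (u - v))\<^sup>2 = 4 * Re (u * cnj v)"
    by (simp only: cmod_power2) (simp add: algebra_simps power2_eq_square)
  then have "(cmod (u - v))\<^sup>2 < (cmod (u + v))\<^sup>2" using assms by simp
  then show ?thesis by (simp add: power_less_imp_less_base)
qed

lemma norm_gt_1_if_mult_eq_1:
  fixes a b :: complex
  assumes "a * b = 1" and "cmod b < cmod a"
  shows "1 < cmod a"
proof (rule ccontr)
  assume "\<not> 1 < cmod a"
  then have "cmod a * cmod b \<le> 1 * cmod b" by (intro mult_right_mono) simp_all
  moreover have "cmod a * cmod b = 1" by (simp add: assms(1) flip: norm_mult)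
  ultimately show False using assms(2) \<open>\<not> 1 < cmod a\<close> by simp
qed

text \<open>The roots of \<open>w\<^sup>2 - s w + 1 = 0\<close>, i.e. the inverse branches of the Joukowski map
  \<open>w \<mapsto> w + 1/w\<close>: \<open>jout s\<close> is the root outside the unit disc for \<open>s \<notin> jcut = [-2, 2]\<close>, while
  \<open>jup\<close> and \<open>jdown\<close> run through the upper and lower unit semicircle as \<open>s\<close> runs through the
  segment and are holomorphic off \<open>(-\<infinity>, -2] \<union> [2, \<infinity>)\<close>.\<close>

definition jcut :: "complex set" where
  "jcut = {s. Im s = 0 \<and> \<bar>Re s\<bar> \<le> 2}"

definition jout :: "complex \<Rightarrow> complex" where
  "jout s = s / 2 * (1 + csqrt (1 - 4 / s\<^sup>2))"

definition jup :: "complex \<Rightarrow> complex" where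
  "jup s = s / 2 + \<i> * csqrt (1 - s\<^sup>2 / 4)"

definition jdown :: "complex \<Rightarrow> complex" where
  "jdown s = s / 2 - \<i> * csqrt (1 - s\<^sup>2 / 4)"

lemma closed_jcut: "closed jcut"
proof -
  have eq: "jcut = {s. Im s = 0} \<inter> {s. Re s \<le> 2} \<inter> {s. - 2 \<le> Re s}"
    by (auto simp: jcut_def)
  show ?thesis
    unfolding eq by (intro closed_Int closed_Collect_le closed_Collect_eq continuous_intros)
qed

lemma Im_eq_0_if_sq_pos_real:
  fixes s :: complex
  assumes "s\<^sup>2 = of_real c" and "0 < c"
  shows "Im s = 0"
proof -
  have "Re s * Im s = 0"
    using arg_cong[OF assms(1), of Im] by (auto simp: power2_eq_square)
  moreover have "Re s \<noteq> 0"
  proof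
    assume "Re s = 0"
    then have "- (Im s)\<^sup>2 = c"
      using arg_cong[OF assms(1), of Re] by (simp add: power2_eq_square)
    then show False using assms(2) zero_le_power2[of "Im s"] by linarith
  qed
  ultimately show ?thesis by simp
qed

lemma nonzero_if_notin_jcut: "s \<notin> jcut \<Longrightarrow> s \<noteq> 0"
  by (auto simp: jcut_def)

lemma jout_radicand_notin_nonpos_Reals:
  assumes "s \<notin> jcut"
  shows "1 - 4 / s\<^sup>2 \<notin> \<real>\<^sub>\<le>\<^sub>0"
proof
  assume "1 - 4 / s\<^sup>2 \<in> \<real>\<^sub>\<le>\<^sub>0"
  then obtain c where c: "1 - 4 / s\<^sup>2 = of_real c" "c \<le> 0"
    by (auto simp: complex_nonpos_Reals_iff complex_eq_iff intro: that[of "Re _"])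
  have s2: "s\<^sup>2 = of_real (4 / (1 - c))"
    using c nonzero_if_notin_jcut[OF assms] by (auto simp: field_simps)
  have pos: "0 < 4 / (1 - c)" "4 / (1 - c) \<le> 2\<^sup>2" using c(2) by (auto simp: field_simps)
  have "Im s = 0" using s2 pos(1) by (rule Im_eq_0_if_sq_pos_real)
  moreover have "(Re s)\<^sup>2 \<le> 2\<^sup>2"
    using arg_cong[OF s2, of Re] pos(2) \<open>Im s = 0\<close> by (simp add: power2_eq_square)
  ultimately have "s \<in> jcut" using power2_le_iff_abs_le[of 2 "Re s"] by (simp add: jcut_def)
  then show False using assms by simp
qed

lemma jup_radicand_notin_nonpos_Reals:
  assumes "Im s \<noteq> 0"
  shows "1 - s\<^sup>2 / 4 \<notin> \<real>\<^sub>\<le>\<^sub>0"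
proof
  assume "1 - s\<^sup>2 / 4 \<in> \<real>\<^sub>\<le>\<^sub>0"
  then obtain c where c: "1 - s\<^sup>2 / 4 = of_real c" "c \<le> 0"
    by (auto simp: complex_nonpos_Reals_iff complex_eq_iff intro: that[of "Re _"])
  then have "s\<^sup>2 = of_real (4 - 4 * c)" by (simp add: field_simps)
  then have "Im s = 0" by (rule Im_eq_0_if_sq_pos_real) (use c(2) in simp)
  then show False using assms by simp
qed

lemma jout_root:
  assumes "s \<noteq> 0"
  shows "(jout s)\<^sup>2 - s * jout s + 1 = 0"
proof -
  define q where "q = csqrt (1 - 4 / s\<^sup>2)"
  have "(jout s)\<^sup>2 - s * jout s + 1 = s\<^sup>2 / 4 * (q\<^sup>2 - 1) + 1"
    by (simp add: jout_def q_def field_simps power2_eq_square)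
  also have "\<dots> = 0" using assms by (simp add: q_def field_simps)
  finally show ?thesis .
qed

lemma jup_root: "(jup s)\<^sup>2 - s * jup s + 1 = 0"
proof -
  define c where "c = csqrt (1 - s\<^sup>2 / 4)"
  have jup: "jup s = s / 2 + \<i> * c" by (simp add: jup_def c_def)
  have "(jup s)\<^sup>2 - s * jup s + 1 = 1 - s\<^sup>2 / 4 - c\<^sup>2"
    unfolding jup by (simp add: power2_eq_square field_simps)
  then show ?thesis by (simp add: c_def)
qed

lemma jdown_root: "(jdown s)\<^sup>2 - s * jdown s + 1 = 0"
proof -
  define c where "c = csqrt (1 - s\<^sup>2 / 4)"
  have jdown: "jdown s = s / 2 - \<i> * c" by (simp add: jdown_def c_def)
  have "(jdown s)\<^sup>2 - s * jdown s + 1 = 1 - s\<^sup>2 / 4 - c\<^sup>2"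
    unfolding jdown by (simp add: power2_eq_square field_simps)
  then show ?thesis by (simp add: c_def)
qed

lemma norm_jout_gt_1:
  assumes "s \<notin> jcut"
  shows "1 < cmod (jout s)"
proof -
  define q where "q = csqrt (1 - 4 / s\<^sup>2)"
  have s0: "s \<noteq> 0" using assms by (rule nonzero_if_notin_jcut)
  have "0 < Re q"
    unfolding q_def by (rule Re_csqrt_pos[OF jout_radicand_notin_nonpos_Reals[OF assms]])
  then have "cmod (1 - q) < cmod (1 + q)" by (intro norm_diff_less_norm_add) simp
  then have "cmod (s / 2 * (1 - q)) < cmod (s / 2 * (1 + q))"
    using s0 by (simp add: norm_mult)
  moreover have "(s / 2 * (1 + q)) * (s / 2 * (1 - q)) = 1"
  proof -
    have "(s / 2 * (1 + q)) * (s / 2 * (1 - q)) = s\<^sup>2 / 4 * (1 - q\<^sup>2)"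
      by (simp add: field_simps power2_eq_square)
    also have "\<dots> = 1" using s0 by (simp add: q_def field_simps)
    finally show ?thesis .
  qed
  ultimately show ?thesis
    unfolding jout_def q_def[symmetric] by (intro norm_gt_1_if_mult_eq_1)
qed

lemma holomorphic_jout: "jout holomorphic_on - jcut"
  unfolding jout_def[abs_def]
  by (intro holomorphic_intros) (auto simp: jout_radicand_notin_nonpos_Reals nonzero_if_notin_jcut)

lemma jout_cnj: "s \<notin> jcut \<Longrightarrow> jout (cnj s) = cnj (jout s)"
  using jout_radicand_notin_nonpos_Reals[of s] by (simp add: jout_def cnj_csqrt)

lemma norm_jup_gt_1:
  assumes "0 < Im s"
  shows "1 < cmod (jup s)"
proof -
  define c where "c = csqrt (1 - s\<^sup>2 / 4)"
  have c2: "c\<^sup>2 = 1 - s\<^sup>2 / 4" by (simp add: c_def)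
  have Re_c: "0 < Re c"
    unfolding c_def using assms by (intro Re_csqrt_pos jup_radicand_notin_nonpos_Reals) simp
  have im: "Re c * Im c = - (Re s * Im s) / 4"
    using arg_cong[OF c2, of Im] by (auto simp: power2_eq_square algebra_simps)
  have "Re c * (Im s * Re c - Re s * Im c) = Im s * (Re c)\<^sup>2 - Re s * (Re c * Im c)"
    by (simp add: algebra_simps power2_eq_square)
  also have "\<dots> = Im s * (Re c)\<^sup>2 + (Re s)\<^sup>2 * Im s / 4"
    unfolding im by (simp add: algebra_simps power2_eq_square)
  also have "\<dots> > 0" using assms Re_c by (intro add_pos_nonneg) auto
  finally have "0 < Re (s / 2 * cnj (\<i> * c))"
    using Re_c by (simp add: zero_less_mult_iff)
  then have less: "cmod (s / 2 - \<i> * c) < cmod (s / 2 + \<i> * c)"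
    by (rule norm_diff_less_norm_add)
  have "(s / 2 + \<i> * c) * (s / 2 - \<i> * c) = s\<^sup>2 / 4 + c\<^sup>2"
    by (simp add: field_simps power2_eq_square)
  also have "\<dots> = 1" by (simp add: c2)
  finally show ?thesis
    using less
    unfolding jup_def c_def[symmetric] by (intro norm_gt_1_if_mult_eq_1)
qed

lemma recip_quadratic_roots:
  fixes a b s :: complex
  assumes "a\<^sup>2 - s * a + 1 = 0" and "b\<^sup>2 - s * b + 1 = 0"
  shows "b = a \<or> b * a = 1"
proof -
  have "(b - a) * (b + a - s) = (b\<^sup>2 - s * b + 1) - (a\<^sup>2 - s * a + 1)"
    by (simp add: algebra_simps power2_eq_square)
  then have "b = a \<or> b = s - a" using assms by (simp add: eq_diff_eq)
  moreover have "(s - a) * a = 1" using assms(1) by (simp add: algebra_simps power2_eq_square)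
  ultimately show ?thesis by auto
qed

lemma recip_quadratic_root_inverse:
  fixes w s :: complex
  assumes "w\<^sup>2 - s * w + 1 = 0"
  shows "(1 / w)\<^sup>2 - s * (1 / w) + 1 = 0"
proof -
  have "w \<noteq> 0" using assms by auto
  then have "(1 / w)\<^sup>2 - s * (1 / w) + 1 = (w\<^sup>2 - s * w + 1) / w\<^sup>2"
    by (simp add: field_simps power2_eq_square)
  then show ?thesis using assms by simp
qed

lemma recip_quadratic_root_unique:
  fixes a b s :: complex
  assumes "a\<^sup>2 - s * a + 1 = 0" "b\<^sup>2 - s * b + 1 = 0" and "1 < cmod a" "1 < cmod b"
  shows "b = a"
proof -
  have "1 * 1 < cmod b * cmod a" using assms(3,4) by (intro mult_strict_mono) auto
  then have "b * a \<noteq> 1" by (auto simp flip: norm_mult)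
  then show ?thesis using recip_quadratic_roots[OF assms(1,2)] by blast
qed

lemma jout_eq_jup:
  assumes "0 < Im s"
  shows "jout s = jup s"
proof -
  have "s \<notin> jcut" using assms by (auto simp: jcut_def)
  then show ?thesis
    using recip_quadratic_root_unique[OF jup_root jout_root norm_jup_gt_1 norm_jout_gt_1]
      assms nonzero_if_notin_jcut by blast
qed

lemma jup_cnj: "1 - s\<^sup>2 / 4 \<notin> \<real>\<^sub>\<le>\<^sub>0 \<Longrightarrow> jup (cnj s) = cnj (jdown s)"
  using cnj_csqrt[of "1 - s\<^sup>2 / 4"] by (simp add: jup_def jdown_def)

lemma jout_eq_jdown:
  assumes "Im s < 0"
  shows "jout s = jdown s"
proof -
  have "s \<notin> jcut" using assms by (auto simp: jcut_def)
  then have "jout s = cnj (jout (cnj s))" by (simp add: jout_cnj)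
  also have "jout (cnj s) = jup (cnj s)" using assms by (intro jout_eq_jup) simp
  also have "\<dots> = cnj (jdown s)"
    using assms by (intro jup_cnj jup_radicand_notin_nonpos_Reals) simp
  finally show ?thesis by simp
qed

lemma jcut_if_root_on_unit_circle:
  assumes "w\<^sup>2 - s * w + 1 = 0" and "cmod w = 1"
  shows "s \<in> jcut"
proof -
  have "w * cnj w = 1" using assms(2) complex_norm_square[of w] by simp
  then have "w * s = w * (w + cnj w)"
    using assms(1) by (simp add: algebra_simps power2_eq_square)
  then have "s = w + cnj w" using assms(2) by auto
  then show ?thesis using abs_Re_le_cmod[of w] assms(2) by (simp add: jcut_def)
qed

lemma norm_jup_on_jcut:
  assumes "s \<in> jcut"
  shows "cmod (jup s) = 1"
proof -
  obtain \<sigma> where \<sigma>: "s = of_real \<sigma>" "\<bar>\<sigma>\<bar> \<le> 2"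
    using assms by (auto simp: jcut_def complex_eq_iff intro: that[of "Re s"])
  then have nonneg: "0 \<le> 1 - \<sigma>\<^sup>2 / 4"
    using power2_le_iff_abs_le[of 2 \<sigma>] by simp
  have "jup s = of_real (\<sigma> / 2) + \<i> * of_real (sqrt (1 - \<sigma>\<^sup>2 / 4))"
    using csqrt_of_real[OF nonneg] by (simp add: jup_def \<sigma>(1))
  then have "(cmod (jup s))\<^sup>2 = 1"
    using nonneg by (simp add: cmod_power2 power_divide)
  then show ?thesis using power2_eq_iff_nonneg[of "cmod (jup s)" 1] by simp
qed

lemma jout_of_real:
  assumes "2 \<le> \<sigma>"
  shows "jout (of_real \<sigma>) = of_real ((\<sigma> + sqrt (\<sigma>\<^sup>2 - 4)) / 2)"
proof -
  have "4 \<le> \<sigma>\<^sup>2" using assms power_mono[of 2 \<sigma> 2] by simp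
  then have "0 \<le> 1 - 4 / \<sigma>\<^sup>2" by (simp add: divide_le_eq_1)
  then have "csqrt (1 - 4 / (of_real \<sigma>)\<^sup>2) = of_real (sqrt (1 - 4 / \<sigma>\<^sup>2))"
    using csqrt_of_real[of "1 - 4 / \<sigma>\<^sup>2"] by simp
  moreover have "sqrt (\<sigma>\<^sup>2 - 4) = \<sigma> * sqrt (1 - 4 / \<sigma>\<^sup>2)"
  proof -
    have "\<sigma>\<^sup>2 - 4 = \<sigma>\<^sup>2 * (1 - 4 / \<sigma>\<^sup>2)" using assms by (simp add: field_simps)
    then show ?thesis using assms by (simp add: real_sqrt_mult)
  qed
  ultimately show ?thesis by (simp add: jout_def field_simps)
qed

definition jbranch :: "real \<Rightarrow> complex \<Rightarrow> complex" where
  "jbranch c = (if c < 0 then jdown else jup)"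

lemma jbranch_root: "(jbranch c s)\<^sup>2 - s * jbranch c s + 1 = 0"
  by (simp add: jbranch_def jup_root jdown_root)

lemma jbranch_cong: "0 < c * c' \<Longrightarrow> jbranch c = jbranch c'"
  by (auto simp: jbranch_def zero_less_mult_iff)

lemma jout_eq_jbranch: "0 < c * Im s \<Longrightarrow> jout s = jbranch c s"
  by (auto simp: jbranch_def zero_less_mult_iff jout_eq_jup jout_eq_jdown)

lemma jbranch_at_endpoint: "e\<^sup>2 = 1 \<Longrightarrow> jbranch c (2 * e) = e"
  by (simp add: jbranch_def jup_def jdown_def)

lemma holomorphic_jbranch: "jbranch c holomorphic_on {s. 0 < Re (1 - s\<^sup>2 / 4)}"
proof -
  have "1 - s\<^sup>2 / 4 \<notin> \<real>\<^sub>\<le>\<^sub>0" if "0 < Re (1 - s\<^sup>2 / 4)" for s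
    using that by (auto simp: complex_nonpos_Reals_iff)
  then show ?thesis
    unfolding jbranch_def jup_def[abs_def] jdown_def[abs_def] by (auto intro!: holomorphic_intros)
qed

lemma norm_recip_quadratic_root_le:
  fixes w s :: complex
  assumes "w\<^sup>2 - s * w + 1 = 0"
  shows "cmod w \<le> cmod s + 1"
proof (cases "cmod w \<le> 1")
  case False
  have "w * w = s * w - 1" using assms by (simp add: algebra_simps power2_eq_square)
  then have "cmod w * cmod w = cmod (s * w - 1)" by (simp flip: norm_mult)
  also have "\<dots> \<le> cmod s * cmod w + 1" by (metis norm_mult norm_one norm_triangle_ineq4)
  also have "\<dots> < (cmod s + 1) * cmod w" using False by (simp add: algebra_simps)
  finally show ?thesis using False by (simp add: mult_less_cancel_right)
qed (simp add: add_increasing)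

lemma recip_quadratic_root_tendsto:
  fixes W S :: "'a \<Rightarrow> complex"
  assumes "(S \<longlongrightarrow> 2 * e) F" and "e\<^sup>2 = 1"
    and "\<forall>\<^sub>F z in F. (W z)\<^sup>2 - S z * W z + 1 = 0"
  shows "(W \<longlongrightarrow> e) F"
proof -
  let ?g = "\<lambda>z. sqrt (cmod (S z - 2 * e) * (cmod (S z) + 1))"
  have "(?g \<longlongrightarrow> sqrt (cmod (2 * e - 2 * e) * (cmod (2 * e) + 1))) F"
    by (intro tendsto_intros assms(1))
  then have "(?g \<longlongrightarrow> 0) F" by simp
  moreover have "\<forall>\<^sub>F z in F. norm (W z - e) \<le> ?g z"
    using assms(3)
  proof eventually_elim
    case (elim z)
    have "(W z - e)\<^sup>2 = (S z - 2 * e) * W z"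
      using elim assms(2) by (simp add: algebra_simps power2_eq_square)
    then have "(cmod (W z - e))\<^sup>2 = cmod (S z - 2 * e) * cmod (W z)"
      by (simp flip: norm_power norm_mult)
    also have "\<dots> \<le> cmod (S z - 2 * e) * (cmod (S z) + 1)"
      using norm_recip_quadratic_root_le[OF elim] by (simp add: mult_left_mono)
    finally show ?case by (simp add: real_le_rsqrt)
  qed
  ultimately have "((\<lambda>z. W z - e) \<longlongrightarrow> 0) F" by (rule Lim_null_comparison[rotated])
  then show ?thesis by (simp add: LIM_zero_iff)
qed

section \<open>Holomorphic functions near the real axis\<close>

lemma Im_sign_from_deriv_sign:
  fixes f :: "complex \<Rightarrow> complex" and x c :: real
  assumes holo: "f holomorphic_on ball (of_real x) \<delta>"
    and deriv_sign: "\<And>w. w \<in> ball (of_real x) \<delta> \<Longrightarrow> 0 < c * Re (deriv f w)"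
    and real: "\<And>y. \<bar>y - x\<bar> < \<delta> \<Longrightarrow> Im (f (of_real y)) = 0"
    and w: "w \<in> ball (of_real x) \<delta>" "0 < Im w"
  shows "0 < c * Im (f w)"
proof -
  \<comment> \<open>follow \<open>c * Im f\<close> up the vertical segment from \<open>Re w\<close> to \<open>w\<close>; its derivative is \<open>c * Re f'\<close>\<close>
  let ?p = "\<lambda>\<tau>::real. of_real (Re w) + \<i> * of_real \<tau>"
  have on_segment: "?p \<tau> \<in> ball (of_real x) \<delta>" if "0 \<le> \<tau>" "\<tau> \<le> Im w" for \<tau>
  proof -
    have "(dist (of_real x) (?p \<tau>))\<^sup>2 \<le> (dist (of_real x) w)\<^sup>2"
      using that by (simp add: dist_norm cmod_power2 power2_commute power_mono)
    then show ?thesis using w(1) by (simp add: power2_le_iff_abs_le)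
  qed
  define g where "g \<tau> = c * Im (f (?p \<tau>))" for \<tau>
  have "g 0 < g (Im w)"
  proof (rule DERIV_pos_imp_increasing[OF w(2)])
    fix \<tau> assume \<tau>: "0 \<le> \<tau>" "\<tau> \<le> Im w"
    have "(?p has_vector_derivative \<i>) (at \<tau>)"
      by (auto intro!: derivative_eq_intros simp: has_vector_derivative_def scaleR_conv_of_real)
    moreover have "(f has_field_derivative deriv f (?p \<tau>)) (at (?p \<tau>))"
      using holo on_segment[OF \<tau>] by (intro holomorphic_derivI) auto
    ultimately have "((f \<circ> ?p) has_vector_derivative (\<i> * deriv f (?p \<tau>))) (at \<tau>)"
      by (rule field_vector_diff_chain_at)
    then have "(g has_real_derivative c * Im (\<i> * deriv f (?p \<tau>))) (at \<tau>)"
      unfolding g_def o_def by (intro DERIV_cmult has_field_derivative_Im)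
    moreover have "0 < c * Im (\<i> * deriv f (?p \<tau>))" using deriv_sign[OF on_segment[OF \<tau>]] by simp
    ultimately show "\<exists>y. (g has_real_derivative y) (at \<tau>) \<and> 0 < y" by blast
  qed
  moreover have "g 0 = 0"
  proof -
    have "\<bar>Re w - x\<bar> < \<delta>" using on_segment[of 0] w(2) by (simp add: dist_real_def)
    then show ?thesis using real by (simp add: g_def)
  qed
  moreover have "g (Im w) = c * Im (f w)"
  proof -
    have "?p (Im w) = w" by (simp add: complex_eq_iff)
    then show ?thesis by (simp add: g_def)
  qed
  ultimately show ?thesis by linarith
qed

lemma real_analytic_at_if_holomorphic:
  fixes h :: "complex \<Rightarrow> complex" and F :: "real \<Rightarrow> complex"
  assumes "0 < \<delta>" and "h holomorphic_on ball (of_real x) \<delta>"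
    and "\<And>y. \<bar>y - x\<bar> < \<delta> \<Longrightarrow> F y = h (of_real y)"
  shows "real_analytic_at F x"
  unfolding real_analytic_at_def
proof (intro exI conjI allI impI)
  fix y assume y: "\<bar>y - x\<bar> < \<delta>"
  then have "of_real y \<in> ball (of_real x :: complex) \<delta>"
    by (simp add: dist_norm abs_minus_commute flip: of_real_diff)
  then have "(\<lambda>n. (deriv ^^ n) h (of_real x) / fact n * (of_real y - of_real x) ^ n) sums h (of_real y)"
    by (rule holomorphic_power_series[OF assms(2)])
  then show "(\<lambda>n. (deriv ^^ n) h (of_real x) / fact n * of_real (y - x) ^ n) sums F y"
    using assms(3)[OF y] by simp
qed (fact assms(1))

lemma real_analytic_at_cnj:
  assumes "real_analytic_at F x"
  shows "real_analytic_at (\<lambda>y. cnj (F y)) x"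
proof -
  obtain \<delta> a where "0 < \<delta>"
    and a: "\<forall>y. \<bar>y - x\<bar> < \<delta> \<longrightarrow> (\<lambda>n. a n * of_real (y - x) ^ n) sums F y"
    using assms unfolding real_analytic_at_def by blast
  show ?thesis
    unfolding real_analytic_at_def
  proof (intro exI conjI allI impI)
    fix y assume "\<bar>y - x\<bar> < \<delta>"
    then have "(\<lambda>n. cnj (a n * of_real (y - x) ^ n)) sums cnj (F y)"
      using a by (simp only: sums_cnj)
    then show "(\<lambda>n. cnj (a n) * of_real (y - x) ^ n) sums cnj (F y)" by simp
  qed (fact \<open>0 < \<delta>\<close>)
qed

lemma continuous_on_reflect_lower:
  assumes "continuous_on {z. 0 \<le> Im z} f"
  shows "continuous_on {z. Im z \<le> 0} (\<lambda>z. cnj (f (cnj z)))"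
proof -
  have "continuous_on {z. Im z \<le> 0} (\<lambda>z. f (cnj z))"
    by (rule continuous_on_compose2[OF assms continuous_on_cnj[OF continuous_on_id]]) auto
  then show ?thesis by (rule continuous_on_cnj)
qed

lemma tendsto_jump_across_real_axis:
  fixes F G :: "complex \<Rightarrow> complex"
  assumes F_cnj: "\<And>w. 0 < Im w \<Longrightarrow> F (cnj w) = cnj (F w)"
    and G_cont: "continuous_on {z. 0 \<le> Im z} G" and G_eq: "\<And>w. 0 < Im w \<Longrightarrow> G w = F w"
    and \<nu>: "Im \<nu> = 0"
  shows "((\<lambda>e::real. F (\<nu> + \<i> * of_real e) - F (\<nu> - \<i> * of_real e))
           \<longlongrightarrow> 2 * \<i> * of_real (Im (G \<nu>))) (at_right 0)"
proof -
  let ?p = "\<lambda>e::real. \<nu> + \<i> * of_real e"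
  have pos: "\<forall>\<^sub>F e in at_right (0::real). 0 < e" by (rule eventually_at_right_less)
  have "(?p \<longlongrightarrow> \<nu>) (at_right 0)"
    by (auto intro!: tendsto_eq_intros)
  then have "filterlim ?p (at \<nu> within {z. 0 \<le> Im z}) (at_right 0)"
    unfolding filterlim_at using pos by (auto elim!: eventually_mono simp: \<nu> complex_eq_iff)
  moreover have "(G \<longlongrightarrow> G \<nu>) (at \<nu> within {z. 0 \<le> Im z})"
    using G_cont \<nu> by (simp add: continuous_on_def)
  ultimately have "((\<lambda>e. G (?p e)) \<longlongrightarrow> G \<nu>) (at_right 0)"
    by (rule filterlim_compose[rotated])
  then have "((\<lambda>e. 2 * \<i> * of_real (Im (G (?p e)))) \<longlongrightarrow> 2 * \<i> * of_real (Im (G \<nu>))) (at_right 0)"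
    by (intro tendsto_intros)
  then show ?thesis
  proof (rule Lim_transform_eventually)
    show "\<forall>\<^sub>F e in at_right 0. 2 * \<i> * of_real (Im (G (?p e))) = F (?p e) - F (\<nu> - \<i> * of_real e)"
      using pos
    proof eventually_elim
      case (elim e)
      have up: "0 < Im (?p e)" using elim \<nu> by simp
      have reflect: "\<nu> - \<i> * of_real e = cnj (?p e)" using \<nu> by (simp add: complex_eq_iff)
      have "F (\<nu> - \<i> * of_real e) = cnj (F (?p e))"
        unfolding reflect by (rule F_cnj[OF up])
      then have "F (?p e) - F (\<nu> - \<i> * of_real e) = F (?p e) - cnj (F (?p e))" by simp
      also have "\<dots> = 2 * \<i> * of_real (Im (F (?p e)))" by (simp add: complex_diff_cnj)
      finally show ?case by (simp add: G_eq[OF up])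
    qed
  qed
qed

section \<open>The normalised trace\<close>

locale transfer_matrix =
  fixes dB dR :: nat
  assumes dB_ge_1: "1 \<le> dB" and dR_ge_1: "1 \<le> dR"
begin

definition r :: real where "r = 1 / sqrt (real (dR * dB))"

definition A :: real where "A = (1 - 1 / real dR) * (1 - 1 / real dB) / 2"

definition B :: real where "B = (1 + 1 / real dR) * (1 + 1 / real dB) / 2"

definition ntr :: "complex \<Rightarrow> complex" where
  "ntr z = (of_real A + of_real B * cos_2sqrt z) / of_real r"

lemma r_pos: "0 < r"
  using dB_ge_1 dR_ge_1 by (simp add: r_def)

lemma r_sq: "r\<^sup>2 = 1 / (real dR * real dB)"
  using dB_ge_1 dR_ge_1 by (simp add: r_def power_divide)

lemma B_pos: "0 < B"
  unfolding B_def by (intro divide_pos_pos mult_pos_pos add_pos_nonneg) auto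

lemma two_r_le_A_plus_B: "2 * r \<le> A + B"
proof -
  have "A + B = 1 + r\<^sup>2"
    using dB_ge_1 dR_ge_1 by (simp add: A_def B_def r_sq field_simps)
  then show ?thesis using zero_le_power2[of "1 - r"] by (simp add: power2_eq_square algebra_simps)
qed

lemma two_r_le_B_minus_A: "2 * r \<le> B - A"
proof -
  define p q where "p = 1 / sqrt (real dR)" and "q = 1 / sqrt (real dB)"
  have "r = p * q" by (simp add: r_def p_def q_def real_sqrt_mult)
  moreover have "B - A = p\<^sup>2 + q\<^sup>2"
    using dB_ge_1 dR_ge_1 by (simp add: A_def B_def p_def q_def power_divide field_simps)
  ultimately show ?thesis using zero_le_power2[of "p - q"] by (simp add: power2_eq_square algebra_simps)
qed

lemma trace_T0_eq: "trace (T0 dB dR z) = of_real r * ntr z"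
  using r_pos by (simp add: trace_T0 ntr_def A_def B_def)

lemma det_T0_eq: "det (T0 dB dR z) = (of_real r)\<^sup>2"
  by (simp add: det_T0 r_sq flip: of_real_power)

lemma is_eigenvalue_T0_iff: "is_eigenvalue (T0 dB dR z) (of_real r * w) \<longleftrightarrow> w\<^sup>2 - ntr z * w + 1 = 0"
proof -
  have "(of_real r * w)\<^sup>2 - trace (T0 dB dR z) * (of_real r * w) + det (T0 dB dR z)
        = (of_real r)\<^sup>2 * (w\<^sup>2 - ntr z * w + 1)"
    by (simp add: trace_T0_eq det_T0_eq algebra_simps power2_eq_square)
  then show ?thesis using r_pos by (simp add: is_eigenvalue_iff_char_poly)
qed

lemma holomorphic_ntr: "ntr holomorphic_on S"
  unfolding ntr_def[abs_def] using r_pos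
  by (intro holomorphic_intros holomorphic_on_subset[OF holomorphic_cos_2sqrt]) auto

lemma ntr_cnj: "ntr (cnj z) = cnj (ntr z)"
  by (simp add: ntr_def cos_2sqrt_cnj)

lemma Im_ntr_of_real: "Im (ntr (of_real x)) = 0"
proof -
  have "cnj (ntr (of_real x)) = ntr (of_real x)" by (simp flip: ntr_cnj)
  then show ?thesis by (simp add: complex_eq_iff)
qed

lemma trace_bounds:
  shows "1 \<le> e \<Longrightarrow> 2 * r \<le> A + B * e" and "1 < e \<Longrightarrow> 2 * r < A + B * e"
    and "e \<le> -1 \<Longrightarrow> A + B * e \<le> - 2 * r" and "e < -1 \<Longrightarrow> A + B * e < - 2 * r"
proof -
  have le: "B * a \<le> B * b" if "a \<le> b" for a b using that B_pos by simp
  have less: "B * a < B * b" if "a < b" for a b using that B_pos by simp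
  show "2 * r \<le> A + B * e" if "1 \<le> e" using le[OF that] two_r_le_A_plus_B by simp
  show "2 * r < A + B * e" if "1 < e" using less[OF that] two_r_le_A_plus_B by simp
  show "A + B * e \<le> - 2 * r" if "e \<le> -1" using le[OF that] two_r_le_B_minus_A by simp
  show "A + B * e < - 2 * r" if "e < -1" using less[OF that] two_r_le_B_minus_A by simp
qed

lemma ntr_of_real_nonneg: "0 \<le> x \<Longrightarrow> ntr (of_real x) = of_real ((A + B * cos (2 * sqrt x)) / r)"
  by (simp add: ntr_def cos_2sqrt_of_real_nonneg)

lemma ntr_of_real_neg:
  assumes "x < 0"
  shows "ntr (of_real x) = of_real ((A + B * cosh (2 * sqrt (- x))) / r)"
    and "2 * r < A + B * cosh (2 * sqrt (- x))"
proof -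
  show "ntr (of_real x) = of_real ((A + B * cosh (2 * sqrt (- x))) / r)"
    using assms by (simp add: ntr_def cos_2sqrt_of_real_nonpos)
  have "cosh (2 * sqrt (- x)) \<noteq> 1" using assms by simp
  then have "1 < cosh (2 * sqrt (- x))" using cosh_real_ge_1 le_less by metis
  then show "2 * r < A + B * cosh (2 * sqrt (- x))" by (rule trace_bounds(2))
qed

lemma trace_sq_eq_iff: "(trace (T0 dB dR z))\<^sup>2 = 4 / of_nat (dR * dB) \<longleftrightarrow> ntr z = 2 \<or> ntr z = -2"
proof -
  have "(trace (T0 dB dR z))\<^sup>2 = 4 / of_nat (dR * dB) \<longleftrightarrow> (of_real r)\<^sup>2 * (ntr z)\<^sup>2 = (of_real r)\<^sup>2 * 2\<^sup>2"
    by (simp add: trace_T0_eq power_mult_distrib r_sq divide_inverse flip: of_real_power)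
  also have "\<dots> \<longleftrightarrow> (ntr z)\<^sup>2 = 2\<^sup>2" using r_pos by simp
  finally show ?thesis using power2_eq_iff[of "ntr z" 2] by simp
qed

lemma sigma1_eq: "sigma1 dB dR = ntr -` jcut"
proof (intro set_eqI iffI)
  fix z assume "z \<in> sigma1 dB dR"
  then obtain m where m: "is_eigenvalue (T0 dB dR z) m" "cmod m = r"
    by (auto simp: sigma1_def r_def)
  define w where "w = m / of_real r"
  have "m = of_real r * w" using r_pos by (simp add: w_def)
  then have "w\<^sup>2 - ntr z * w + 1 = 0" using m(1) is_eigenvalue_T0_iff by simp
  moreover have "cmod w = 1" using m(2) r_pos by (simp add: w_def norm_divide)
  ultimately show "z \<in> ntr -` jcut" by (simp add: jcut_if_root_on_unit_circle)
next
  fix z assume "z \<in> ntr -` jcut"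
  then have "cmod (of_real r * jup (ntr z)) = r"
    using norm_jup_on_jcut r_pos by (simp add: norm_mult)
  moreover have "is_eigenvalue (T0 dB dR z) (of_real r * jup (ntr z))"
    by (simp add: is_eigenvalue_T0_iff jup_root)
  ultimately show "z \<in> sigma1 dB dR" by (auto simp: sigma1_def r_def)
qed

lemma sigma1_subset: "sigma1 dB dR \<subseteq> {z. Im z = 0 \<and> 0 \<le> Re z}"
proof
  fix z assume "z \<in> sigma1 dB dR"
  then obtain \<sigma> where \<sigma>: "ntr z = of_real \<sigma>" "\<bar>\<sigma>\<bar> \<le> 2"
    by (auto simp: sigma1_eq jcut_def complex_eq_iff intro: that[of "Re (ntr z)"])
  define e where "e = (r * \<sigma> - A) / B"
  have "cos_2sqrt z = (of_real r * ntr z - of_real A) / of_real B"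
    using r_pos B_pos by (simp add: ntr_def)
  then have "cos_2sqrt z = of_real e"
    by (simp add: \<sigma>(1) e_def)
  moreover have "\<bar>e\<bar> \<le> 1"
  proof -
    have "\<bar>r * \<sigma>\<bar> \<le> 2 * r" using \<sigma>(2) r_pos by (simp add: abs_mult)
    moreover have "A + B * e = r * \<sigma>" using B_pos by (simp add: e_def)
    ultimately have "\<not> 1 < e" and "\<not> e < -1"
      using trace_bounds(2,4)[of e] by (auto simp: abs_le_iff)
    then show ?thesis by (simp add: abs_le_iff)
  qed
  ultimately have "Im (2 * csqrt z) = 0"
    using Im_eq_0_if_cos_real_bounded[of "2 * csqrt z"] by (simp add: cos_2sqrt_def)
  then have "z \<in> \<real>\<^sub>\<ge>\<^sub>0" using Im_csqrt_eq_0_iff[of z] by simp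
  then show "z \<in> {z. Im z = 0 \<and> 0 \<le> Re z}" by (simp add: complex_nonneg_Reals_iff)
qed

lemma isCont_ntr: "isCont ntr z"
  using holomorphic_on_imp_continuous_on[OF holomorphic_ntr[of UNIV]]
  by (simp add: continuous_on_eq_continuous_at)

lemma closed_sigma1: "closed (sigma1 dB dR)"
  unfolding sigma1_eq by (rule continuous_closed_vimage[OF closed_jcut isCont_ntr])

lemma notin_sigma1_iff: "z \<notin> sigma1 dB dR \<longleftrightarrow> ntr z \<notin> jcut"
  by (simp add: sigma1_eq)

lemma notin_sigma1_if_Im_nonzero: "Im z \<noteq> 0 \<Longrightarrow> z \<notin> sigma1 dB dR"
  using sigma1_subset by blast

lemma open_compl_sigma1: "open (- sigma1 dB dR)"
  using closed_sigma1 by (simp add: open_Compl)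

section \<open>The eigenvalue branches\<close>

definition mu_plus :: "complex \<Rightarrow> complex" where
  "mu_plus z = of_real r * jout (ntr z)"

definition mu_minus :: "complex \<Rightarrow> complex" where
  "mu_minus z = of_real r / jout (ntr z)"

lemma holomorphic_jout_ntr: "(\<lambda>z. jout (ntr z)) holomorphic_on - sigma1 dB dR"
  using holomorphic_on_compose_gen[OF holomorphic_ntr holomorphic_jout]
  by (simp add: o_def notin_sigma1_iff subset_eq)

lemma mu_plus_analytic: "mu_plus analytic_on - sigma1 dB dR"
  unfolding mu_plus_def[abs_def] analytic_on_open[OF open_compl_sigma1]
  by (intro holomorphic_intros holomorphic_jout_ntr)

lemma mu_minus_analytic: "mu_minus analytic_on - sigma1 dB dR"
proof -
  have "jout (ntr z) \<noteq> 0" if "z \<notin> sigma1 dB dR" for z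
    using norm_jout_gt_1[of "ntr z"] that by (auto simp: notin_sigma1_iff)
  then show ?thesis
    unfolding mu_minus_def[abs_def] analytic_on_open[OF open_compl_sigma1]
    by (intro holomorphic_intros holomorphic_jout_ntr) auto
qed

lemma mu_plus_mu_minus_eigenvalues:
  assumes "z \<notin> sigma1 dB dR"
  shows "is_eigenvalue (T0 dB dR z) (mu_plus z)" "is_eigenvalue (T0 dB dR z) (mu_minus z)"
    and "r < cmod (mu_plus z)" "cmod (mu_minus z) < r"
proof -
  have s: "ntr z \<notin> jcut" using assms by (simp add: notin_sigma1_iff)
  have root: "(jout (ntr z))\<^sup>2 - ntr z * jout (ntr z) + 1 = 0"
    using jout_root nonzero_if_notin_jcut[OF s] by blast
  have gt: "1 < cmod (jout (ntr z))" using norm_jout_gt_1[OF s] .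
  show "is_eigenvalue (T0 dB dR z) (mu_plus z)"
    unfolding mu_plus_def is_eigenvalue_T0_iff by (rule root)
  have "(1 / jout (ntr z))\<^sup>2 - ntr z * (1 / jout (ntr z)) + 1 = 0"
    using root by (rule recip_quadratic_root_inverse)
  then show "is_eigenvalue (T0 dB dR z) (mu_minus z)"
    unfolding is_eigenvalue_T0_iff[symmetric] by (simp add: mu_minus_def)
  show "r < cmod (mu_plus z)" using gt r_pos by (simp add: mu_plus_def norm_mult)
  show "cmod (mu_minus z) < r"
    using gt r_pos by (simp add: mu_minus_def norm_divide divide_less_eq)
qed

section \<open>Boundary values on the real axis\<close>

lemma deriv_ntr_of_real_pos:
  assumes "0 < x"
  shows "deriv ntr (of_real x) = of_real (- B * sin (2 * sqrt x) / (r * sqrt x))"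
proof -
  have "(of_real x :: complex) \<notin> \<real>\<^sub>\<le>\<^sub>0" using assms by (simp add: complex_nonpos_Reals_iff)
  then have "(ntr has_field_derivative
      of_real B * (- sin (2 * csqrt (of_real x)) / csqrt (of_real x)) / of_real r) (at (of_real x))"
    unfolding ntr_def[abs_def] using r_pos
    by (auto intro!: derivative_eq_intros cos_2sqrt_has_field_derivative)
  then show ?thesis
    using assms by (simp add: DERIV_imp_deriv csqrt_of_real flip: sin_of_real)
qed

lemma Re_deriv_ntr_nonzero:
  assumes "ntr (of_real x) \<in> jcut" and "ntr (of_real x) \<noteq> 2" and "ntr (of_real x) \<noteq> -2"
  shows "Re (deriv ntr (of_real x)) \<noteq> 0"
proof -
  have "0 \<le> x" using assms(1) sigma1_subset by (auto simp: sigma1_eq)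
  define \<sigma> where "\<sigma> = (A + B * cos (2 * sqrt x)) / r"
  have "ntr (of_real x) = of_real \<sigma>" using \<open>0 \<le> x\<close> by (simp add: ntr_of_real_nonneg \<sigma>_def)
  then have "\<bar>\<sigma>\<bar> < 2" using assms by (auto simp: jcut_def complex_eq_iff)
  have "sin (2 * sqrt x) \<noteq> 0"
  proof
    assume "sin (2 * sqrt x) = 0"
    then have "cos (2 * sqrt x) = 1 \<or> cos (2 * sqrt x) = -1"
      using sin_cos_squared_add[of "2 * sqrt x"] by (simp add: power2_eq_1_iff)
    then have "2 * r \<le> r * \<sigma> \<or> r * \<sigma> \<le> - 2 * r"
      using trace_bounds(1)[of 1] trace_bounds(3)[of "-1"] r_pos by (auto simp: \<sigma>_def)
    moreover have "r * (-2) < r * \<sigma>" "r * \<sigma> < r * 2"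
      using \<open>\<bar>\<sigma>\<bar> < 2\<close> r_pos by (intro mult_strict_left_mono; simp add: abs_less_iff)+
    ultimately show False by linarith
  qed
  then have "0 < x" using \<open>0 \<le> x\<close> by (cases "x = 0") auto
  then show ?thesis
    using \<open>sin (2 * sqrt x) \<noteq> 0\<close> B_pos r_pos by (simp add: deriv_ntr_of_real_pos)
qed

text \<open>Upper boundary value of \<open>jout \<circ> ntr\<close> on the real axis: where \<open>ntr\<close> runs through the cut,
  the limit from above is the branch on whose side \<open>ntr\<close> maps the upper half plane, which is
  decided by the sign of \<open>ntr'\<close>.\<close>

definition boundary_root :: "real \<Rightarrow> complex" where
  "boundary_root x = (if ntr (of_real x) \<in> jcut
     then jbranch (Re (deriv ntr (of_real x))) (ntr (of_real x)) else jout (ntr (of_real x)))"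

definition upper_root :: "complex \<Rightarrow> complex" where
  "upper_root z = (if 0 < Im z then jout (ntr z) else boundary_root (Re z))"

lemma upper_root_root:
  assumes "0 \<le> Im z"
  shows "(upper_root z)\<^sup>2 - ntr z * upper_root z + 1 = 0"
proof (cases "0 < Im z")
  case True
  then have "ntr z \<notin> jcut" using notin_sigma1_if_Im_nonzero notin_sigma1_iff by auto
  then show ?thesis using True by (simp add: upper_root_def jout_root nonzero_if_notin_jcut)
next
  case False
  then have "z = of_real (Re z)" using assms by (simp add: complex_eq_iff)
  then show ?thesis using False
    by (auto simp: upper_root_def boundary_root_def jbranch_root jout_root nonzero_if_notin_jcut)
qed

lemma upper_root_eq_jout:
  assumes "z \<notin> sigma1 dB dR" and "0 \<le> Im z"
  shows "upper_root z = jout (ntr z)"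
proof -
  have "Im z = 0 \<Longrightarrow> z = of_real (Re z)" by (simp add: complex_eq_iff)
  then show ?thesis using assms
    by (auto simp: upper_root_def boundary_root_def notin_sigma1_iff)
qed

definition branch_region :: "real \<Rightarrow> complex set" where
  "branch_region c = {w. 0 < Re (1 - (ntr w)\<^sup>2 / 4) \<and> 0 < c * Re (deriv ntr w)}"

lemma open_branch_region: "open (branch_region c)"
proof -
  have "continuous_on UNIV (deriv ntr)"
    by (intro holomorphic_on_imp_continuous_on holomorphic_deriv holomorphic_ntr) auto
  then show ?thesis
    unfolding branch_region_def using isCont_ntr
    by (intro open_Collect_conj open_Collect_less continuous_intros)
      (auto simp: continuous_on_eq_continuous_at)
qed

lemma holomorphic_jbranch_ntr: "(\<lambda>w. jbranch c (ntr w)) holomorphic_on branch_region c"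
  by (intro holomorphic_on_compose_gen[OF holomorphic_ntr holomorphic_jbranch, unfolded o_def])
    (auto simp: branch_region_def)

lemma in_branch_region:
  assumes "ntr (of_real x) \<in> jcut" and "ntr (of_real x) \<noteq> 2" and "ntr (of_real x) \<noteq> -2"
  shows "of_real x \<in> branch_region (Re (deriv ntr (of_real x)))"
proof -
  obtain \<sigma> where \<sigma>: "ntr (of_real x) = of_real \<sigma>" "\<bar>\<sigma>\<bar> < 2"
    using assms by (auto simp: jcut_def complex_eq_iff intro: that[of "Re (ntr (of_real x))"])
  then have "\<sigma>\<^sup>2 < 2\<^sup>2" using power_strict_mono[of "\<bar>\<sigma>\<bar>" 2 2] by simp
  then show ?thesis
    using Re_deriv_ntr_nonzero[OF assms] \<sigma>(1)
    by (auto simp: branch_region_def power2_eq_square zero_less_mult_iff)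
qed

lemma upper_root_eq_jbranch:
  assumes region: "ball (of_real x) \<delta> \<subseteq> branch_region c"
    and w: "w \<in> ball (of_real x) \<delta>" "0 \<le> Im w"
  shows "upper_root w = jbranch c (ntr w)"
proof (cases "0 < Im w")
  case True
  have "0 < c * Im (ntr w)"
  proof (rule Im_sign_from_deriv_sign[OF holomorphic_ntr _ _ w(1) True])
    show "0 < c * Re (deriv ntr v)" if "v \<in> ball (of_real x) \<delta>" for v
      using region that by (auto simp: branch_region_def)
  qed (rule Im_ntr_of_real)
  then show ?thesis using True by (simp add: upper_root_def jout_eq_jbranch)
next
  case False
  define y where "y = Re w"
  have wy: "w = of_real y" using False w(2) by (simp add: y_def complex_eq_iff)
  then have "of_real y \<in> branch_region c" using region w(1) by auto
  then have inside: "0 < Re (1 - (ntr (of_real y))\<^sup>2 / 4)" and c: "0 < c * Re (deriv ntr (of_real y))"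
    by (auto simp: branch_region_def)
  define \<tau> where "\<tau> = Re (ntr (of_real y))"
  have "ntr (of_real y) = of_real \<tau>"
    using Im_ntr_of_real by (simp add: \<tau>_def complex_eq_iff)
  then have "(ntr (of_real y))\<^sup>2 = of_real (\<tau>\<^sup>2)" and real: "Im (ntr (of_real y)) = 0" by simp_all
  then have "\<tau>\<^sup>2 \<le> 2\<^sup>2" using inside by simp
  then have "ntr (of_real y) \<in> jcut"
    using abs_le_square_iff[of \<tau> 2] real by (simp add: jcut_def \<tau>_def)
  moreover have "jbranch (Re (deriv ntr (of_real y))) = jbranch c"
    using c by (intro jbranch_cong) (simp add: mult.commute)
  ultimately show ?thesis using False by (simp add: upper_root_def boundary_root_def wy)
qed

lemma upper_root_local_extension:
  assumes "ntr (of_real x) \<noteq> 2" and "ntr (of_real x) \<noteq> -2"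
  obtains \<delta> h where "0 < \<delta>" and "h holomorphic_on ball (of_real x) \<delta>"
    and "\<And>w. w \<in> ball (of_real x) \<delta> \<Longrightarrow> (h w)\<^sup>2 - ntr w * h w + 1 = 0"
    and "\<And>w. w \<in> ball (of_real x) \<delta> \<Longrightarrow> 0 \<le> Im w \<Longrightarrow> upper_root w = h w"
proof (cases "ntr (of_real x) \<in> jcut")
  case False
  then obtain \<delta> where "0 < \<delta>" and \<delta>: "ball (of_real x) \<delta> \<subseteq> - sigma1 dB dR"
    using open_compl_sigma1 by (metis ComplI notin_sigma1_iff open_contains_ball)
  show ?thesis
  proof (rule that[OF \<open>0 < \<delta>\<close>])
    show "(\<lambda>w. jout (ntr w)) holomorphic_on ball (of_real x) \<delta>"
      using holomorphic_jout_ntr \<delta> by (rule holomorphic_on_subset)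
    show "(jout (ntr w))\<^sup>2 - ntr w * jout (ntr w) + 1 = 0" if "w \<in> ball (of_real x) \<delta>" for w
      using \<delta> that by (intro jout_root nonzero_if_notin_jcut) (auto simp: notin_sigma1_iff)
    show "upper_root w = jout (ntr w)" if "w \<in> ball (of_real x) \<delta>" "0 \<le> Im w" for w
      using \<delta> that by (intro upper_root_eq_jout) auto
  qed
next
  case True
  define c where "c = Re (deriv ntr (of_real x))"
  obtain \<delta> where "0 < \<delta>" and \<delta>: "ball (of_real x) \<delta> \<subseteq> branch_region c"
    using open_branch_region in_branch_region[OF True assms] by (metis c_def open_contains_ball)
  show ?thesis
  proof (rule that[OF \<open>0 < \<delta>\<close>])
    show "(\<lambda>w. jbranch c (ntr w)) holomorphic_on ball (of_real x) \<delta>"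
      using holomorphic_jbranch_ntr \<delta> by (rule holomorphic_on_subset)
    show "(jbranch c (ntr w))\<^sup>2 - ntr w * jbranch c (ntr w) + 1 = 0" for w
      by (rule jbranch_root)
    show "upper_root w = jbranch c (ntr w)" if "w \<in> ball (of_real x) \<delta>" "0 \<le> Im w" for w
      using \<delta> that by (rule upper_root_eq_jbranch)
  qed
qed

lemma upper_root_continuous_at_endpoint:
  assumes "Im z = 0" and "ntr z = 2 * e" and "e\<^sup>2 = 1"
  shows "continuous (at z within {z. 0 \<le> Im z}) upper_root"
proof -
  have "ntr z \<in> jcut" using assms(2,3) by (auto simp: jcut_def power2_eq_1_iff)
  moreover have "z = of_real (Re z)" using assms(1) by (simp add: complex_eq_iff)
  ultimately have "upper_root z = e"
    using assms by (auto simp: upper_root_def boundary_root_def jbranch_at_endpoint)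
  moreover have "(upper_root \<longlongrightarrow> e) (at z within {z. 0 \<le> Im z})"
  proof (rule recip_quadratic_root_tendsto[OF _ assms(3)])
    show "(ntr \<longlongrightarrow> 2 * e) (at z within {z. 0 \<le> Im z})"
      unfolding assms(2)[symmetric]
      using continuous_at_imp_continuous_within[OF isCont_ntr] by (simp add: continuous_within)
    show "\<forall>\<^sub>F w in at z within {z. 0 \<le> Im z}. (upper_root w)\<^sup>2 - ntr w * upper_root w + 1 = 0"
      by (auto simp: eventually_at_filter upper_root_root)
  qed
  ultimately show ?thesis by (simp add: continuous_within)
qed

lemma continuous_on_upper_root: "continuous_on {z. 0 \<le> Im z} upper_root"
  unfolding continuous_on_eq_continuous_within
proof
  fix z :: complex assume z: "z \<in> {z. 0 \<le> Im z}"
  show "continuous (at z within {z. 0 \<le> Im z}) upper_root"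
  proof (cases "0 < Im z")
    case True
    then have "z \<in> - sigma1 dB dR" using notin_sigma1_if_Im_nonzero by auto
    then have "isCont (\<lambda>w. jout (ntr w)) z"
      using holomorphic_jout_ntr open_compl_sigma1
      by (meson continuous_on_eq_continuous_at holomorphic_on_imp_continuous_on)
    then show ?thesis
    proof (rule continuous_transform_within[OF continuous_at_imp_continuous_within True z])
      fix w assume "w \<in> {z. 0 \<le> Im z}" "dist w z < Im z"
      then have "0 < Im w" using abs_Im_le_cmod[of "w - z"] by (simp add: dist_norm abs_less_iff)
      then show "jout (ntr w) = upper_root w" by (simp add: upper_root_def)
    qed
  next
    case False
    then have real: "Im z = 0" using z by simp
    then have zx: "z = of_real (Re z)" by (simp add: complex_eq_iff)
    show ?thesis
    proof (cases "ntr z = 2 \<or> ntr z = -2")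
      case True
      then show ?thesis
        using upper_root_continuous_at_endpoint[OF real, of 1] upper_root_continuous_at_endpoint[OF real, of "-1"]
        by auto
    next
      case False
      then obtain \<delta> h where "0 < \<delta>" and h: "h holomorphic_on ball z \<delta>"
        and eq: "\<And>w. w \<in> ball z \<delta> \<Longrightarrow> 0 \<le> Im w \<Longrightarrow> upper_root w = h w"
        using upper_root_local_extension[of "Re z"] zx by metis
      have "isCont h z"
        using h \<open>0 < \<delta>\<close> by (meson centre_in_ball continuous_on_eq_continuous_at
            holomorphic_on_imp_continuous_on open_ball)
      then show ?thesis
      proof (rule continuous_transform_within[OF continuous_at_imp_continuous_within \<open>0 < \<delta>\<close> z])
        fix w assume "w \<in> {z. 0 \<le> Im z}" "dist w z < \<delta>"
        then show "h w = upper_root w" using eq by (simp add: dist_commute)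
      qed
    qed
  qed
qed

lemma upper_root_nonzero: "0 \<le> Im z \<Longrightarrow> upper_root z \<noteq> 0"
  using upper_root_root[of z] by auto

lemma upper_root_cnj:
  assumes "Im z \<le> 0"
  shows "upper_root (cnj z) = (if Im z < 0 then cnj (jout (ntr z)) else boundary_root (Re z))"
  using assms notin_sigma1_if_Im_nonzero[of z]
  by (auto simp: upper_root_def ntr_cnj jout_cnj notin_sigma1_iff)

context
  fixes F :: "complex \<Rightarrow> complex"
  assumes F_cont: "continuous_on (- {0}) F" and F_cnj: "\<And>w. F (cnj w) = cnj (F w)"
begin

lemma continuous_on_upper_boundary:
  "continuous_on {z. 0 \<le> Im z} (\<lambda>z. if 0 < Im z then F (jout (ntr z)) else F (boundary_root (Re z)))"
proof -
  have "continuous_on {z. 0 \<le> Im z} (\<lambda>z. F (upper_root z))"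
    using upper_root_nonzero
    by (intro continuous_on_compose2[OF F_cont continuous_on_upper_root]) auto
  then show ?thesis by (rule continuous_on_eq) (simp add: upper_root_def)
qed

lemma continuous_on_lower_boundary:
  "continuous_on {z. Im z \<le> 0} (\<lambda>z. if Im z < 0 then F (jout (ntr z)) else cnj (F (boundary_root (Re z))))"
proof -
  have "continuous_on {z. Im z \<le> 0} (\<lambda>z. cnj (F (upper_root (cnj z))))"
    using upper_root_nonzero
    by (intro continuous_on_reflect_lower continuous_on_compose2[OF F_cont continuous_on_upper_root]) auto
  then show ?thesis by (rule continuous_on_eq) (simp add: upper_root_cnj F_cnj)
qed

lemma tendsto_jump:
  assumes "\<nu> \<in> sigma1 dB dR"
  shows "((\<lambda>e::real. F (jout (ntr (\<nu> + \<i> * of_real e))) - F (jout (ntr (\<nu> - \<i> * of_real e))))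
           \<longlongrightarrow> 2 * \<i> * of_real (Im (F (boundary_root (Re \<nu>))))) (at_right 0)"
proof -
  have "Im \<nu> = 0" using assms sigma1_subset by auto
  have "((\<lambda>e::real. F (jout (ntr (\<nu> + \<i> * of_real e))) - F (jout (ntr (\<nu> - \<i> * of_real e))))
      \<longlongrightarrow> 2 * \<i> * of_real (Im (if 0 < Im \<nu> then F (jout (ntr \<nu>)) else F (boundary_root (Re \<nu>)))))
      (at_right 0)"
    using continuous_on_upper_boundary \<open>Im \<nu> = 0\<close> notin_sigma1_if_Im_nonzero
    by (intro tendsto_jump_across_real_axis) (auto simp: F_cnj ntr_cnj jout_cnj notin_sigma1_iff)
  then show ?thesis using \<open>Im \<nu> = 0\<close> by simp
qed

end

lemma real_analytic_at_boundary:
  assumes F: "F holomorphic_on - {0}" and "ntr (of_real x) \<noteq> 2" and "ntr (of_real x) \<noteq> -2"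
  shows "real_analytic_at (\<lambda>y. F (boundary_root y)) x"
proof -
  obtain \<delta> h where "0 < \<delta>" and h: "h holomorphic_on ball (of_real x) \<delta>"
    and root: "\<And>w. w \<in> ball (of_real x) \<delta> \<Longrightarrow> (h w)\<^sup>2 - ntr w * h w + 1 = 0"
    and eq: "\<And>w. w \<in> ball (of_real x) \<delta> \<Longrightarrow> 0 \<le> Im w \<Longrightarrow> upper_root w = h w"
    using upper_root_local_extension assms(2,3) by metis
  show ?thesis
  proof (rule real_analytic_at_if_holomorphic[OF \<open>0 < \<delta>\<close>])
    show "(\<lambda>w. F (h w)) holomorphic_on ball (of_real x) \<delta>"
      using root by (intro holomorphic_on_compose_gen[OF h F, unfolded o_def]) fastforce
    fix y assume "\<bar>y - x\<bar> < \<delta>"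
    then have "(of_real y :: complex) \<in> ball (of_real x) \<delta>" by (simp add: dist_real_def abs_minus_commute)
    then show "F (boundary_root y) = F (h (of_real y))" using eq[of "of_real y"] by (simp add: upper_root_def)
  qed
qed

definition mu_plus_upper :: "real \<Rightarrow> complex" where
  "mu_plus_upper x = of_real r * boundary_root x"

definition mu_minus_upper :: "real \<Rightarrow> complex" where
  "mu_minus_upper x = of_real r / boundary_root x"

lemma mu_plus_boundary_continuous:
  "continuous_on {z. 0 \<le> Im z} (\<lambda>z. if 0 < Im z then mu_plus z else mu_plus_upper (Re z))"
  "continuous_on {z. Im z \<le> 0} (\<lambda>z. if Im z < 0 then mu_plus z else cnj (mu_plus_upper (Re z)))"
  unfolding mu_plus_def mu_plus_upper_def
  by (intro continuous_on_upper_boundary continuous_on_lower_boundary continuous_intros; simp)+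

lemma mu_minus_boundary_continuous:
  "continuous_on {z. 0 \<le> Im z} (\<lambda>z. if 0 < Im z then mu_minus z else mu_minus_upper (Re z))"
  "continuous_on {z. Im z \<le> 0} (\<lambda>z. if Im z < 0 then mu_minus z else cnj (mu_minus_upper (Re z)))"
  unfolding mu_minus_def mu_minus_upper_def
  by (intro continuous_on_upper_boundary continuous_on_lower_boundary continuous_intros; simp)+

lemma mu_plus_jump:
  "\<nu> \<in> sigma1 dB dR \<Longrightarrow> ((\<lambda>e::real. mu_plus (\<nu> + \<i> * of_real e) - mu_plus (\<nu> - \<i> * of_real e))
     \<longlongrightarrow> 2 * \<i> * of_real (Im (mu_plus_upper (Re \<nu>)))) (at_right 0)"
  using tendsto_jump[of "\<lambda>w. of_real r * w"]
  by (simp add: mu_plus_def mu_plus_upper_def continuous_intros)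

lemma mu_minus_jump:
  "\<nu> \<in> sigma1 dB dR \<Longrightarrow> ((\<lambda>e::real. mu_minus (\<nu> + \<i> * of_real e) - mu_minus (\<nu> - \<i> * of_real e))
     \<longlongrightarrow> 2 * \<i> * of_real (Im (mu_minus_upper (Re \<nu>)))) (at_right 0)"
  using tendsto_jump[of "\<lambda>w. of_real r / w"]
  by (simp add: mu_minus_def mu_minus_upper_def continuous_intros)

lemma boundary_values_real_analytic:
  assumes "(trace (T0 dB dR (of_real x)))\<^sup>2 \<noteq> 4 / of_nat (dR * dB)"
  shows "real_analytic_at mu_plus_upper x \<and> real_analytic_at (\<lambda>x. cnj (mu_plus_upper x)) x \<and>
    real_analytic_at mu_minus_upper x \<and> real_analytic_at (\<lambda>x. cnj (mu_minus_upper x)) x"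
proof -
  have "ntr (of_real x) \<noteq> 2" "ntr (of_real x) \<noteq> -2" using assms trace_sq_eq_iff by auto
  moreover have "(\<lambda>w. of_real r * w) holomorphic_on - {0}" "(\<lambda>w. of_real r / w) holomorphic_on - {0}"
    by (auto intro!: holomorphic_intros)
  ultimately have "real_analytic_at mu_plus_upper x" "real_analytic_at mu_minus_upper x"
    unfolding mu_plus_upper_def[abs_def] mu_minus_upper_def[abs_def]
    by (auto intro: real_analytic_at_boundary)
  then show ?thesis by (simp add: real_analytic_at_cnj)
qed

lemma trace_sq_isolated:
  "\<exists>e>0. \<forall>y. y \<noteq> x \<and> \<bar>y - x\<bar> < e \<longrightarrow> (trace (T0 dB dR (of_real y)))\<^sup>2 \<noteq> 4 / of_nat (dR * dB)"
proof -
  define f where "f z = (ntr z)\<^sup>2 - 4" for z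
  define \<sigma> where "\<sigma> = (A + B * cosh 2) / r"
  have "2 < \<sigma>" using ntr_of_real_neg(2)[of "-1"] r_pos by (simp add: \<sigma>_def field_simps)
  then have "2\<^sup>2 < \<sigma>\<^sup>2" by (intro power_strict_mono) auto
  moreover have "ntr (- 1) = of_real \<sigma>" using ntr_of_real_neg(1)[of "-1"] by (simp add: \<sigma>_def)
  ultimately have "f (-1) \<noteq> 0" by (simp add: f_def complex_eq_iff flip: of_real_power)
  moreover have "f holomorphic_on UNIV"
    unfolding f_def[abs_def] by (intro holomorphic_intros holomorphic_ntr)
  ultimately have "\<forall>\<^sub>F w in at (of_real x). f w \<noteq> 0 \<and> w \<in> UNIV"
    by (intro non_zero_neighbour_alt) auto
  then obtain e where "0 < e" and e: "\<And>w. w \<noteq> of_real x \<Longrightarrow> dist w (of_real x) < e \<Longrightarrow> f w \<noteq> 0"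
    unfolding eventually_at by auto
  show ?thesis
  proof (intro exI[of _ e] conjI allI impI)
    fix y assume "y \<noteq> x \<and> \<bar>y - x\<bar> < e"
    then have "f (of_real y) \<noteq> 0" using e[of "of_real y"] by (simp add: dist_real_def)
    then show "(trace (T0 dB dR (of_real y)))\<^sup>2 \<noteq> 4 / of_nat (dR * dB)"
      unfolding trace_sq_eq_iff by (auto simp: f_def)
  qed (fact \<open>0 < e\<close>)
qed

section \<open>Asymptotics as \<open>\<lambda> \<rightarrow> -\<infinity>\<close>\<close>

lemma mu_plus_of_real_neg:
  assumes "x < 0"
  defines "T \<equiv> A + B * cosh (2 * sqrt (- x))"
  shows "mu_plus (of_real x) = of_real ((T + sqrt (T\<^sup>2 - 4 * r\<^sup>2)) / 2)"
proof -
  have "2 * r < T" using ntr_of_real_neg(2)[OF assms(1)] by (simp add: T_def)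
  then have "2 \<le> T / r" using r_pos by (simp add: field_simps)
  have "mu_plus (of_real x) = of_real r * jout (of_real (T / r))"
    unfolding mu_plus_def ntr_of_real_neg(1)[OF assms(1)] T_def ..
  also have "\<dots> = of_real (r * ((T / r + sqrt ((T / r)\<^sup>2 - 4)) / 2))"
    by (simp only: jout_of_real[OF \<open>2 \<le> T / r\<close>] of_real_mult)
  also have "r * ((T / r + sqrt ((T / r)\<^sup>2 - 4)) / 2) = (T + r * sqrt ((T / r)\<^sup>2 - 4)) / 2"
    using r_pos by (simp add: field_simps)
  also have "r * sqrt ((T / r)\<^sup>2 - 4) = sqrt (T\<^sup>2 - 4 * r\<^sup>2)"
  proof -
    have "T\<^sup>2 - 4 * r\<^sup>2 = r\<^sup>2 * ((T / r)\<^sup>2 - 4)" using r_pos by (simp add: field_simps)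
    then show ?thesis using r_pos by (simp add: real_sqrt_mult)
  qed
  finally show ?thesis .
qed

text \<open>The larger root of \<open>w\<^sup>2 - U w + r\<^sup>2 t\<^sup>2\<close> for \<open>U = t tr T\<^sub>0(\<lambda>)\<close>, \<open>t = exp (-2 sqrt (-\<lambda>))\<close>.\<close>

definition scaled_mu_plus :: "real \<Rightarrow> real" where
  "scaled_mu_plus t =
     (A * t + B * (1 + t\<^sup>2) / 2 + sqrt ((A * t + B * (1 + t\<^sup>2) / 2)\<^sup>2 - 4 * r\<^sup>2 * t\<^sup>2)) / 2"

lemma mu_plus_scaled_of_real_neg:
  assumes "x < 0"
  shows "of_real (exp (- 2 * \<bar>Im (csqrt (of_real x))\<bar>)) * mu_plus (of_real x)
           = of_real (scaled_mu_plus (exp (- 2 * sqrt (- x))))"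
proof -
  define t where "t = exp (- 2 * sqrt (- x))"
  define T where "T = A + B * cosh (2 * sqrt (- x))"
  have "t > 0" by (simp add: t_def)
  have cosh: "t * cosh (2 * sqrt (- x)) = (1 + t\<^sup>2) / 2"
    by (simp add: t_def cosh_def exp_minus field_simps power2_eq_square flip: exp_add)
  have "t * T = A * t + B * (t * cosh (2 * sqrt (- x)))" by (simp add: T_def algebra_simps)
  also have "\<dots> = A * t + B * (1 + t\<^sup>2) / 2" unfolding cosh by simp
  finally have tT: "t * T = A * t + B * (1 + t\<^sup>2) / 2" .
  have "sqrt ((t * T)\<^sup>2 - 4 * r\<^sup>2 * t\<^sup>2) = t * sqrt (T\<^sup>2 - 4 * r\<^sup>2)"
  proof -
    have "(t * T)\<^sup>2 - 4 * r\<^sup>2 * t\<^sup>2 = t\<^sup>2 * (T\<^sup>2 - 4 * r\<^sup>2)" by (simp add: power_mult_distrib algebra_simps)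
    then show ?thesis using \<open>t > 0\<close> by (simp add: real_sqrt_mult)
  qed
  then have "scaled_mu_plus t = t * ((T + sqrt (T\<^sup>2 - 4 * r\<^sup>2)) / 2)"
    unfolding scaled_mu_plus_def tT[symmetric] by (simp add: algebra_simps)
  moreover have "\<bar>Im (csqrt (of_real x))\<bar> = sqrt (- x)" using assms by simp
  ultimately show ?thesis
    unfolding mu_plus_of_real_neg[OF assms] T_def[symmetric] by (simp only: of_real_mult t_def)
qed

lemma mu_plus_scaled_tendsto:
  "((\<lambda>x::real. of_real (exp (- 2 * \<bar>Im (csqrt (of_real x))\<bar>)) * mu_plus (of_real x))
     \<longlongrightarrow> of_real ((real dR + 1) / (2 * real dR) * ((real dB + 1) / (2 * real dB)))) at_bot"
proof -
  have "((\<lambda>x::real. exp (- 2 * sqrt (- x))) \<longlongrightarrow> 0) at_bot" by real_asymp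
  then have "((\<lambda>x. scaled_mu_plus (exp (- 2 * sqrt (- x)))) \<longlongrightarrow> scaled_mu_plus 0) at_bot"
    unfolding scaled_mu_plus_def by (intro tendsto_intros) auto
  moreover have "scaled_mu_plus 0 = (real dR + 1) / (2 * real dR) * ((real dB + 1) / (2 * real dB))"
    using B_pos dB_ge_1 dR_ge_1 by (simp add: scaled_mu_plus_def) (simp add: B_def field_simps)
  ultimately have "((\<lambda>x. of_real (scaled_mu_plus (exp (- 2 * sqrt (- x))))) \<longlongrightarrow>
      (of_real ((real dR + 1) / (2 * real dR) * ((real dB + 1) / (2 * real dB))) :: complex)) at_bot"
    by (intro tendsto_of_real) simp
  then show ?thesis
  proof (rule Lim_transform_eventually)
    show "\<forall>\<^sub>F x in at_bot. of_real (scaled_mu_plus (exp (- 2 * sqrt (- x)))) =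
        of_real (exp (- 2 * \<bar>Im (csqrt (of_real x))\<bar>)) * mu_plus (of_real x)"
      unfolding eventually_at_bot_dense
      by (intro exI[of _ 0] allI impI) (rule mu_plus_scaled_of_real_neg[symmetric])
  qed
qed

lemma mu_minus_scaled_tendsto:
  "((\<lambda>x::real. of_real (exp (2 * \<bar>Im (csqrt (of_real x))\<bar>)) * mu_minus (of_real x))
     \<longlongrightarrow> of_real (2 / (real dR + 1) * (2 / (real dB + 1)))) at_bot"
proof -
  define L where "L = (real dR + 1) / (2 * real dR) * ((real dB + 1) / (2 * real dB))"
  have "L \<noteq> 0" using dB_ge_1 dR_ge_1 by (simp add: L_def)
  have "((\<lambda>x::real. of_real (exp (- 2 * \<bar>Im (csqrt (of_real x))\<bar>)) * mu_plus (of_real x))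
      \<longlongrightarrow> of_real L) at_bot"
    using mu_plus_scaled_tendsto unfolding L_def .
  then have "((\<lambda>x::real. of_real (r\<^sup>2) / (of_real (exp (- 2 * \<bar>Im (csqrt (of_real x))\<bar>)) * mu_plus (of_real x)))
      \<longlongrightarrow> of_real (r\<^sup>2) / of_real L) at_bot"
    using \<open>L \<noteq> 0\<close> by (intro tendsto_intros) auto
  moreover have "of_real (r\<^sup>2) / of_real L = (of_real (2 / (real dR + 1) * (2 / (real dB + 1))) :: complex)"
    using dB_ge_1 dR_ge_1 by (simp add: L_def r_sq field_simps flip: of_real_divide)
  moreover have "of_real (r\<^sup>2) / (of_real (exp (- 2 * \<bar>Im (csqrt (of_real x))\<bar>)) * mu_plus (of_real x))
      = of_real (exp (2 * \<bar>Im (csqrt (of_real x))\<bar>)) * mu_minus (of_real x)" for x :: real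
    by (simp add: mu_plus_def mu_minus_def exp_minus field_simps power2_eq_square)
  ultimately show ?thesis by simp
qed

end

theorem theorem4p3:
  fixes dB dR :: nat
  assumes "dB \<ge> 1" and "dR \<ge> 1"
  shows "sigma1 dB dR \<subseteq> {z. Im z = 0 \<and> Re z \<ge> 0} \<and>
   (\<exists>(mp :: complex \<Rightarrow> complex) (mm :: complex \<Rightarrow> complex)
      (mpU :: real \<Rightarrow> complex) (mpL :: real \<Rightarrow> complex)
      (mmU :: real \<Rightarrow> complex) (mmL :: real \<Rightarrow> complex).
     mp analytic_on (- sigma1 dB dR) \<and> mm analytic_on (- sigma1 dB dR) \<and>
     (\<forall>l. l \<notin> sigma1 dB dR \<longrightarrow>
        is_eigenvalue (T0 dB dR l) (mp l) \<and> is_eigenvalue (T0 dB dR l) (mm l) \<and>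
        cmod (mp l) > 1 / sqrt (real (dR * dB)) \<and>
        cmod (mm l) < 1 / sqrt (real (dR * dB))) \<and>
     ((\<lambda>x::real. of_real (exp (- 2 * \<bar>Im (csqrt (of_real x))\<bar>)) * mp (of_real x))
        \<longlongrightarrow> of_real ((real dR + 1) / (2 * real dR) * ((real dB + 1) / (2 * real dB)))) at_bot \<and>
     ((\<lambda>x::real. of_real (exp (2 * \<bar>Im (csqrt (of_real x))\<bar>)) * mm (of_real x))
        \<longlongrightarrow> of_real (2 / (real dR + 1) * (2 / (real dB + 1)))) at_bot \<and>
     continuous_on {z. Im z \<ge> 0} (\<lambda>z. if Im z > 0 then mp z else mpU (Re z)) \<and>
     continuous_on {z. Im z \<le> 0} (\<lambda>z. if Im z < 0 then mp z else mpL (Re z)) \<and>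
     continuous_on {z. Im z \<ge> 0} (\<lambda>z. if Im z > 0 then mm z else mmU (Re z)) \<and>
     continuous_on {z. Im z \<le> 0} (\<lambda>z. if Im z < 0 then mm z else mmL (Re z)) \<and>
     (\<forall>x. \<exists>e>0. \<forall>y. y \<noteq> x \<and> \<bar>y - x\<bar> < e \<longrightarrow>
        (trace (T0 dB dR (of_real y)))\<^sup>2 \<noteq> 4 / of_nat (dR * dB)) \<and>
     (\<forall>x. (trace (T0 dB dR (of_real x)))\<^sup>2 \<noteq> 4 / of_nat (dR * dB) \<longrightarrow>
        real_analytic_at mpU x \<and> real_analytic_at mpL x \<and>
        real_analytic_at mmU x \<and> real_analytic_at mmL x) \<and>
     (\<forall>\<nu>\<in>sigma1 dB dR.
        ((\<lambda>e::real. mp (\<nu> + \<i> * of_real e) - mp (\<nu> - \<i> * of_real e))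
           \<longlongrightarrow> 2 * \<i> * of_real (Im (mpU (Re \<nu>)))) (at_right 0) \<and>
        ((\<lambda>e::real. mm (\<nu> + \<i> * of_real e) - mm (\<nu> - \<i> * of_real e))
           \<longlongrightarrow> 2 * \<i> * of_real (Im (mmU (Re \<nu>)))) (at_right 0)))"
proof -
  interpret transfer_matrix dB dR using assms by unfold_locales
  show ?thesis
    apply (rule conjI[OF sigma1_subset])
    apply (rule exI[of _ mu_plus], rule exI[of _ mu_minus], rule exI[of _ mu_plus_upper],
        rule exI[of _ "\<lambda>x. cnj (mu_plus_upper x)"], rule exI[of _ mu_minus_upper],
        rule exI[of _ "\<lambda>x. cnj (mu_minus_upper x)"])
    using mu_plus_analytic mu_minus_analytic mu_plus_mu_minus_eigenvalues[unfolded r_def]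
      mu_plus_scaled_tendsto mu_minus_scaled_tendsto mu_plus_boundary_continuous
      mu_minus_boundary_continuous trace_sq_isolated boundary_values_real_analytic
      mu_plus_jump mu_minus_jump
    by simp
qed

end
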